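(* Let $\mathcal{M}=\{\mathcal{M}_o\}$ be a noisy $n$-qudit instrument that is applied every time a computational-basis measurement is performed. Assume all Weyl gates are implemented ideally. Run the following routine with initial state $\rho$ and sequence length $m\ge 1$: - Set $\alpha_0=0$. - For $i=1,\dots,m$: choose $\alpha_i,\beta_i\in\mathbb{Z}_d^n$ uniformly and independently at random; apply the gate $Z^{\beta_i}X^{\alpha_{i-1}-\alpha_i}$; measure with $\mathcal{M}$, obtaining outcome $o_i$; set $k_i=\alpha_i+o_i$. - Return $\vec k=(k_1,\dots,k_m)$. Then for every $\vec k\in(\mathbb{Z}_d^n)^m$, the probability that the routine returns $\vec k$ is $$\Pr(\vec k)=\operatorname{tr}\big(\hat{\mathcal{M}}_{k_m}\circ\cdots\circ\hat{\mathcal{M}}_{k_1}(\rho)\big),$$ where $\hat{\mathcal{M}}$ is the randomly compiled version of $\mathcal{M}$.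
   Context: Let $d,n$ be positive integers, with arithmetic on $\mathbb{Z}_d^n$ modulo $d$. Let $X^x=\sum_j|j+x\rangle\langle j|$ and $Z^z=\sum_j e^{2\pi i z\cdot j/d}|j\rangle\langle j|$. For an operator $A$, $\mathcal{A}(\rho)=A\rho A^\dagger$. An instrument $\{\mathcal{M}_o\}_{o\in\mathbb{Z}_d^n}$ is a family of completely positive trace-non-increasing maps summing to a trace-preserving map. Measuring a state $\sigma$ with it yields outcome $o$ with probability $\operatorname{tr}\mathcal{M}_o(\sigma)$ and post-measurement state $\mathcal{M}_o(\sigma)/\operatorname{tr}\mathcal{M}_o(\sigma)$. The randomly compiled version of $\mathcal{M}$ is $$\hat{\mathcal{M}}_k=d^{-3n}\sum_{a,b,x}\mathcal{X}^{x}\circ\mathcal{Z}^{a}\circ\mathcal{M}_{k-x}\circ\mathcal{Z}^{b}\circ\mathcal{X}^{-x}.$$ *)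

theory Defs
  imports Complex_Main
begin

text \<open>Operators on the d^n-dimensional Hilbert space spanned by the basis kets |j>, j in Z_d^n,
  are represented by their matrix entries, as functions of (row index, column index).\<close>

type_synonym op = "nat list \<Rightarrow> nat list \<Rightarrow> complex"

definition Zdn :: "nat \<Rightarrow> nat \<Rightarrow> nat list set" where
  "Zdn d n = {j. length j = n \<and> (\<forall>a\<in>set j. a < d)}"

definition vzero :: "nat \<Rightarrow> nat list" where
  "vzero n = replicate n 0"

definition vadd :: "nat \<Rightarrow> nat list \<Rightarrow> nat list \<Rightarrow> nat list" where
  "vadd d x y = map2 (\<lambda>a b. (a + b) mod d) x y"

definition vneg :: "nat \<Rightarrow> nat list \<Rightarrow> nat list" where
  "vneg d x = map (\<lambda>a. (d - a mod d) mod d) x"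

definition vsub :: "nat \<Rightarrow> nat list \<Rightarrow> nat list \<Rightarrow> nat list" where
  "vsub d x y = vadd d x (vneg d y)"

definition vdot :: "nat list \<Rightarrow> nat list \<Rightarrow> nat" where
  "vdot z j = sum_list (map2 (*) z j)"

definition omul :: "nat \<Rightarrow> nat \<Rightarrow> op \<Rightarrow> op \<Rightarrow> op" where
  "omul d n A B = (\<lambda>i k. \<Sum>j\<in>Zdn d n. A i j * B j k)"

definition oadj :: "op \<Rightarrow> op" where
  "oadj A = (\<lambda>i j. cnj (A j i))"

definition otr :: "nat \<Rightarrow> nat \<Rightarrow> op \<Rightarrow> complex" where
  "otr d n A = (\<Sum>j\<in>Zdn d n. A j j)"

definition oscale :: "complex \<Rightarrow> op \<Rightarrow> op" where
  "oscale c A = (\<lambda>i j. c * A i j)"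

definition conjop :: "nat \<Rightarrow> nat \<Rightarrow> op \<Rightarrow> op \<Rightarrow> op" where
  "conjop d n A \<rho> = omul d n (omul d n A \<rho>) (oadj A)"

definition Xop :: "nat \<Rightarrow> nat \<Rightarrow> nat list \<Rightarrow> op" where
  "Xop d n x = (\<lambda>i j. if i \<in> Zdn d n \<and> j \<in> Zdn d n \<and> i = vadd d j x then 1 else 0)"

definition Zop :: "nat \<Rightarrow> nat \<Rightarrow> nat list \<Rightarrow> op" where
  "Zop d n z = (\<lambda>i j. if i \<in> Zdn d n \<and> i = j
                       then cis (2 * pi * real (vdot z j) / real d) else 0)"

definition density :: "nat \<Rightarrow> nat \<Rightarrow> op \<Rightarrow> bool" where
  "density d n \<rho> \<longleftrightarrow>
     (\<forall>v :: nat list \<Rightarrow> complex.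
        (\<Sum>i\<in>Zdn d n. \<Sum>j\<in>Zdn d n. cnj (v i) * \<rho> i j * v j) \<in> \<real> \<and>
        0 \<le> Re (\<Sum>i\<in>Zdn d n. \<Sum>j\<in>Zdn d n. cnj (v i) * \<rho> i j * v j))
     \<and> otr d n \<rho> = 1"

definition instrument :: "nat \<Rightarrow> nat \<Rightarrow> (nat list \<Rightarrow> op \<Rightarrow> op) \<Rightarrow> bool" where
  "instrument d n M \<longleftrightarrow>
     (\<forall>u\<in>Zdn d n. \<exists>Ks :: op list.
        \<forall>\<sigma>. M u \<sigma> = (\<lambda>i j. \<Sum>A\<leftarrow>Ks. conjop d n A \<sigma> i j))
     \<and> (\<forall>\<sigma>. (\<Sum>u\<in>Zdn d n. otr d n (M u \<sigma>)) = otr d n \<sigma>)"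

definition Mhat :: "nat \<Rightarrow> nat \<Rightarrow> (nat list \<Rightarrow> op \<Rightarrow> op) \<Rightarrow> nat list \<Rightarrow> op \<Rightarrow> op" where
  "Mhat d n M k \<sigma> =
     oscale (1 / (of_nat d) ^ (3 * n))
       (\<lambda>r c. \<Sum>a\<in>Zdn d n. \<Sum>b\<in>Zdn d n. \<Sum>x\<in>Zdn d n.
          conjop d n (Xop d n x)
            (conjop d n (Zop d n a)
              (M (vsub d k x)
                (conjop d n (Zop d n b)
                  (conjop d n (Xop d n (vneg d x)) \<sigma>)))) r c)"

text \<open>Probability of observing the outcome sequence os when, starting in state \<sigma> with
  previous shift a_prev, the gates Z^{b_i} X^{a_{i-1} - a_i} are applied, each followed by a
  measurement with M (post-measurement state renormalised).\<close>

fun seqprob :: "nat \<Rightarrow> nat \<Rightarrow> (nat list \<Rightarrow> op \<Rightarrow> op) \<Rightarrow> op \<Rightarrow> nat list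
                 \<Rightarrow> nat list list \<Rightarrow> nat list list \<Rightarrow> nat list list \<Rightarrow> complex" where
  "seqprob d n M \<sigma> ap [] [] [] = 1"
| "seqprob d n M \<sigma> ap (a # as) (b # bs) (u # os) =
     (let G = omul d n (Zop d n b) (Xop d n (vsub d ap a));
          \<mu> = M u (conjop d n G \<sigma>);
          p = otr d n \<mu>
      in p * seqprob d n M (oscale (1 / p) \<mu>) a as bs os)"
| "seqprob d n M \<sigma> ap _ _ _ = 0"

definition seqs :: "nat \<Rightarrow> nat \<Rightarrow> nat \<Rightarrow> nat list list set" where
  "seqs d n m = {xs. length xs = m \<and> set xs \<subseteq> Zdn d n}"

text \<open>Probability that the routine returns ks: alpha_i, beta_i uniform and independent on
  Z_d^n, alpha_0 = 0, k_i = alpha_i + o_i.\<close>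

definition routine_prob :: "nat \<Rightarrow> nat \<Rightarrow> (nat list \<Rightarrow> op \<Rightarrow> op) \<Rightarrow> op \<Rightarrow> nat
                             \<Rightarrow> nat list list \<Rightarrow> complex" where
  "routine_prob d n M \<rho> m ks =
     (\<Sum>\<alpha>\<in>seqs d n m. \<Sum>\<beta>\<in>seqs d n m. \<Sum>os\<in>seqs d n m.
        if map2 (vadd d) \<alpha> os = ks
        then (1 / (of_nat d) ^ (2 * n)) ^ m * seqprob d n M \<rho> (vzero n) \<alpha> \<beta> os
        else 0)"

end

theory Submission
  imports Defs
begin

text \<open>
  Renormalising the post-measurement state and multiplying by the outcome probability cancel,
  so every run of the routine contributes the trace of its unnormalised branch state; a branch of
  probability zero stays of trace zero because the instrument is positive and trace
  non-increasing. Write the gate of round i as Z^beta_i X^(-alpha_i) X^alpha_(i-1) and substitute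
  o_i = k_i - alpha_i. By induction on the length of k, the routine started with an arbitrary
  previous shift alpha_0 equals the compiled trace of X^alpha_0 rho X^(-alpha_0): the factor
  X^alpha_i is handed on to the next round, and the extra random Z^a of the compiled instrument is
  harmless, since conjugation by Z commutes with conjugation by X and is absorbed into the next
  Z^beta by reindexing. The free sum over a supplies the factor d^n that turns d^(-3n) into
  d^(-2n).
\<close>

section \<open>Arithmetic in Z_d^n\<close>

lemma Zdn_iff: "j \<in> Zdn d n \<longleftrightarrow> length j = n \<and> (\<forall>i<n. j ! i < d)"
  unfolding Zdn_def by (auto simp: all_set_conv_all_nth)

lemma Zdn_eq_lists: "Zdn d n = {xs. set xs \<subseteq> {..<d} \<and> length xs = n}"
  unfolding Zdn_def by auto

lemma finite_Zdn [simp]: "finite (Zdn d n)"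
  by (simp add: Zdn_eq_lists finite_lists_length_eq)

lemma card_Zdn: "card (Zdn d n) = d ^ n"
  by (simp add: Zdn_eq_lists card_lists_length_eq)

lemma length_Zdn: "x \<in> Zdn d n \<Longrightarrow> length x = n"
  by (simp add: Zdn_def)

lemma length_vadd [simp]: "length (vadd d x y) = min (length x) (length y)"
  by (simp add: vadd_def)

lemma nth_vadd [simp]:
  "i < length x \<Longrightarrow> i < length y \<Longrightarrow> vadd d x y ! i = (x ! i + y ! i) mod d"
  by (simp add: vadd_def)

lemma length_vneg [simp]: "length (vneg d x) = length x"
  by (simp add: vneg_def)

lemma nth_vneg [simp]: "i < length x \<Longrightarrow> vneg d x ! i = (d - x ! i mod d) mod d"
  by (simp add: vneg_def)

lemma vadd_in_Zdn: "0 < d \<Longrightarrow> length x = n \<Longrightarrow> length y = n \<Longrightarrow> vadd d x y \<in> Zdn d n"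
  by (simp add: Zdn_iff)

lemma vneg_in_Zdn: "0 < d \<Longrightarrow> length x = n \<Longrightarrow> vneg d x \<in> Zdn d n"
  by (simp add: Zdn_iff)

lemma vsub_in_Zdn: "0 < d \<Longrightarrow> length x = n \<Longrightarrow> length y = n \<Longrightarrow> vsub d x y \<in> Zdn d n"
  by (simp add: Zdn_iff vsub_def)

lemma length_vzero [simp]: "length (vzero n) = n"
  by (simp add: vzero_def)

lemma vzero_in_Zdn: "0 < d \<Longrightarrow> vzero n \<in> Zdn d n"
  by (simp add: Zdn_iff vzero_def)

lemma vadd_assoc:
  "length x = n \<Longrightarrow> length y = n \<Longrightarrow> length z = n \<Longrightarrow>
   vadd d (vadd d x y) z = vadd d x (vadd d y z)"
  by (rule nth_equalityI) (simp_all add: mod_add_left_eq mod_add_right_eq add.assoc)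

lemma vadd_commute: "vadd d x y = vadd d y x"
  by (rule nth_equalityI) (simp_all add: add.commute)

lemma vzero_vadd: "y \<in> Zdn d n \<Longrightarrow> vadd d (vzero n) y = y"
  by (rule nth_equalityI) (auto simp: Zdn_iff vzero_def)

lemma mod_add_neg_self: "0 < d \<Longrightarrow> (c + (d - c mod d) mod d) mod d = (0::nat)"
proof -
  assume "0 < d"
  then have "c mod d + (d - c mod d) = d" by simp
  then show ?thesis by (metis mod_add_eq mod_mod_trivial mod_self)
qed

lemma mod_plus_minus_cancel:
  "0 < d \<Longrightarrow> ((b + c) mod d + (d - c mod d) mod d) mod d = b mod (d::nat)"
  by (metis add.assoc mod_add_left_eq mod_add_right_eq mod_add_neg_self add.right_neutral)

lemma mod_minus_plus_cancel:
  "0 < d \<Longrightarrow> ((b + (d - c mod d) mod d) mod d + c) mod d = b mod (d::nat)"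
proof -
  assume d: "0 < d"
  let ?e = "(d - c mod d) mod d"
  have "((b + ?e) mod d + c) mod d = (b + ?e + c) mod d"
    by (rule mod_add_left_eq)
  also have "\<dots> = ((b + c) + ?e) mod d"
    by (simp only: ac_simps)
  also have "\<dots> = ((b + c) mod d + ?e) mod d"
    by (simp add: mod_add_left_eq)
  finally show ?thesis using mod_plus_minus_cancel[OF d] by simp
qed

lemma vadd_vneg_cancel: "x \<in> Zdn d n \<Longrightarrow> length y = n \<Longrightarrow> vadd d (vadd d x y) (vneg d y) = x"
  by (rule nth_equalityI) (auto simp: Zdn_iff mod_plus_minus_cancel)

lemma vadd_right_cancel:
  "x \<in> Zdn d n \<Longrightarrow> x' \<in> Zdn d n \<Longrightarrow> length y = n \<Longrightarrow> vadd d x y = vadd d x' y \<Longrightarrow> x = x'"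
  by (metis vadd_vneg_cancel)

lemma vadd_vsub_cancel: "x \<in> Zdn d n \<Longrightarrow> length y = n \<Longrightarrow> vadd d (vsub d x y) y = x"
  unfolding vsub_def by (rule nth_equalityI) (auto simp: Zdn_iff mod_minus_plus_cancel)

lemma bij_betw_vadd_right:
  "0 < d \<Longrightarrow> length c = n \<Longrightarrow> bij_betw (\<lambda>b. vadd d b c) (Zdn d n) (Zdn d n)"
proof (rule bij_betw_imageI)
  assume d: "0 < d" and c: "length c = n"
  show "inj_on (\<lambda>b. vadd d b c) (Zdn d n)"
    using c by (auto intro: inj_onI dest: vadd_right_cancel)
  have "x \<in> (\<lambda>b. vadd d b c) ` Zdn d n" if "x \<in> Zdn d n" for x
    using vadd_vsub_cancel[OF that c] vsub_in_Zdn[OF d length_Zdn[OF that] c] by (metis image_eqI)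
  then show "(\<lambda>b. vadd d b c) ` Zdn d n = Zdn d n"
    using d c by (auto intro: vadd_in_Zdn dest: length_Zdn)
qed

lemma vadd_eq_iff_vsub:
  assumes "a \<in> Zdn d n" "u \<in> Zdn d n" "k \<in> Zdn d n"
  shows "vadd d a u = k \<longleftrightarrow> u = vsub d k a"
proof
  assume "vadd d a u = k"
  then show "u = vsub d k a"
    using vadd_vneg_cancel[OF assms(2) length_Zdn[OF assms(1)]] by (simp add: vsub_def vadd_commute)
next
  assume "u = vsub d k a"
  then show "vadd d a u = k"
    using vadd_vsub_cancel[OF assms(3) length_Zdn[OF assms(1)]] by (simp add: vadd_commute)
qed

lemma sum_vadd_eq:
  assumes "0 < d" "a \<in> Zdn d n" "k \<in> Zdn d n"
  shows "(\<Sum>u\<in>Zdn d n. if vadd d a u = k then f u else 0) = f (vsub d k a)"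
proof -
  have "(\<Sum>u\<in>Zdn d n. if vadd d a u = k then f u else 0) =
        (\<Sum>u\<in>Zdn d n. if u = vsub d k a then f u else 0)"
    using assms by (intro sum.cong) (auto simp: vadd_eq_iff_vsub)
  also have "\<dots> = f (vsub d k a)"
    using assms by (simp add: vsub_in_Zdn length_Zdn)
  finally show ?thesis .
qed

lemma omul_assoc: "omul d n A (omul d n B C) = omul d n (omul d n A B) C"
proof (intro ext)
  fix i k
  have "omul d n A (omul d n B C) i k = (\<Sum>j\<in>Zdn d n. \<Sum>l\<in>Zdn d n. A i j * B j l * C l k)"
    by (simp add: omul_def sum_distrib_left mult.assoc)
  also have "\<dots> = (\<Sum>l\<in>Zdn d n. \<Sum>j\<in>Zdn d n. A i j * B j l * C l k)"
    by (rule sum.swap)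
  also have "\<dots> = omul d n (omul d n A B) C i k"
    by (simp add: omul_def sum_distrib_right)
  finally show "omul d n A (omul d n B C) i k = omul d n (omul d n A B) C i k" .
qed

lemma oadj_omul: "oadj (omul d n A B) = omul d n (oadj B) (oadj A)"
  by (simp add: oadj_def omul_def fun_eq_iff mult.commute)

lemma conjop_conjop: "conjop d n A (conjop d n B \<sigma>) = conjop d n (omul d n A B) \<sigma>"
  by (simp add: conjop_def oadj_omul omul_assoc)

lemma conjop_oscale: "conjop d n (oscale c A) \<sigma> = oscale (c * cnj c) (conjop d n A \<sigma>)"
  by (simp add: conjop_def omul_def oscale_def oadj_def fun_eq_iff
      sum_distrib_left sum_distrib_right mult_ac)

lemma oscale_one [simp]: "oscale 1 A = A"
  by (simp add: oscale_def)

lemma omul_add_left: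
  "omul d n (\<lambda>i j. \<sigma> i j + \<tau> i j) B = (\<lambda>i j. omul d n \<sigma> B i j + omul d n \<tau> B i j)"
  by (simp add: omul_def distrib_right sum.distrib)

lemma omul_add_right:
  "omul d n A (\<lambda>i j. \<sigma> i j + \<tau> i j) = (\<lambda>i j. omul d n A \<sigma> i j + omul d n A \<tau> i j)"
  by (simp add: omul_def distrib_left sum.distrib)

lemma omul_oscale_left: "omul d n (oscale c \<sigma>) B = oscale c (omul d n \<sigma> B)"
  by (simp add: omul_def oscale_def sum_distrib_left mult_ac)

lemma omul_oscale_right: "omul d n A (oscale c \<sigma>) = oscale c (omul d n A \<sigma>)"
  by (simp add: omul_def oscale_def sum_distrib_left mult_ac)

lemma otr_omul_commute: "otr d n (omul d n A B) = otr d n (omul d n B A)"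
  unfolding otr_def omul_def by (subst sum.swap) (simp add: mult.commute)

lemma otr_sum: "finite S \<Longrightarrow> otr d n (\<lambda>i j. \<Sum>s\<in>S. g s i j) = (\<Sum>s\<in>S. otr d n (g s))"
  unfolding otr_def by (rule sum.swap)

lemma otr_oscale: "otr d n (oscale c \<sigma>) = c * otr d n \<sigma>"
  unfolding otr_def oscale_def by (simp add: sum_distrib_left)

definition oid :: "nat \<Rightarrow> nat \<Rightarrow> op" where
  "oid d n = (\<lambda>i j. if i \<in> Zdn d n \<and> i = j then 1 else 0)"

lemma otr_oid_omul: "otr d n (omul d n (oid d n) \<sigma>) = otr d n \<sigma>"
  unfolding otr_def omul_def oid_def
  by (intro sum.cong) (simp_all add: if_distrib[of "\<lambda>a. a * _"] cong: if_cong)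

lemma otr_conjop_unitary:
  assumes "omul d n (oadj U) U = oid d n"
  shows "otr d n (conjop d n U \<sigma>) = otr d n \<sigma>"
proof -
  have "otr d n (conjop d n U \<sigma>) = otr d n (omul d n (oadj U) (omul d n U \<sigma>))"
    unfolding conjop_def by (rule otr_omul_commute)
  also have "\<dots> = otr d n \<sigma>"
    by (simp add: omul_assoc assms otr_oid_omul)
  finally show ?thesis .
qed

section \<open>Weyl operators\<close>

definition omega :: "nat \<Rightarrow> nat \<Rightarrow> complex" where
  "omega d v = cis (2 * pi * real v / real d)"

lemma Zop_omega: "Zop d n z = (\<lambda>i j. if i \<in> Zdn d n \<and> i = j then omega d (vdot z j) else 0)"
  unfolding Zop_def omega_def ..

lemma omega_add: "omega d (a + b) = omega d a * omega d b"
  by (simp add: omega_def cis_mult add_divide_distrib distrib_left)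

lemma omega_mod: "0 < d \<Longrightarrow> omega d (a mod d) = omega d a"
proof -
  assume d: "0 < d"
  have "2 * pi * real (d * (a div d)) / real d = 2 * pi * real (a div d)"
    using d by simp
  then have "omega d (d * (a div d)) = 1"
    by (simp add: omega_def cis_multiple_2pi)
  then show ?thesis
    by (metis mult_div_mod_eq omega_add mult.right_neutral add.commute)
qed

lemma omega_mult_cnj: "omega d a * cnj (omega d a) = 1"
  by (simp add: omega_def cis_cnj cis_mult)

lemma vdot_Cons [simp]: "vdot (c # cs) (k # ks) = c * k + vdot cs ks"
  by (simp add: vdot_def)

lemma vdot_Nil [simp]: "vdot [] ks = 0" "vdot cs [] = 0"
  by (simp_all add: vdot_def)

lemma vadd_Cons [simp]: "vadd d (x # xs) (y # ys) = ((x + y) mod d) # vadd d xs ys"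
  by (simp add: vadd_def)

lemma vdot_commute: "vdot a b = vdot b a"
proof (induction a arbitrary: b)
  case Nil then show ?case by simp
next
  case (Cons x xs) then show ?case by (cases b) simp_all
qed

lemma vdot_vadd_right_mod:
  "length k = length c \<Longrightarrow> length y = length c \<Longrightarrow>
   vdot c (vadd d k y) mod d = (vdot c k + vdot c y) mod d"
proof (induction c arbitrary: k y)
  case Nil then show ?case by simp
next
  case (Cons c cs)
  then obtain k1 ks y1 ys where k: "k = k1 # ks" and y: "y = y1 # ys"
    and len: "length ks = length cs" "length ys = length cs"
    by (metis length_Suc_conv)
  have "(c * ((k1 + y1) mod d)) mod d = (c * k1 + c * y1) mod d"
    by (simp add: mod_mult_right_eq distrib_left)
  then have "(c * ((k1 + y1) mod d) + vdot cs (vadd d ks ys)) mod d =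
             (c * k1 + c * y1 + (vdot cs ks + vdot cs ys)) mod d"
    using Cons.IH[OF len] by (rule mod_add_cong)
  then show ?case by (simp add: k y ac_simps)
qed

lemma omega_vdot_vadd_right:
  "0 < d \<Longrightarrow> length k = length c \<Longrightarrow> length y = length c \<Longrightarrow>
   omega d (vdot c (vadd d k y)) = omega d (vdot c k) * omega d (vdot c y)"
  by (metis omega_mod vdot_vadd_right_mod omega_add)

lemma omega_vdot_vadd_left:
  "0 < d \<Longrightarrow> length b = length j \<Longrightarrow> length c = length j \<Longrightarrow>
   omega d (vdot (vadd d b c) j) = omega d (vdot b j) * omega d (vdot c j)"
  by (metis omega_vdot_vadd_right vdot_commute)

lemma Xop_unitary:
  "0 < d \<Longrightarrow> length y = n \<Longrightarrow> omul d n (oadj (Xop d n y)) (Xop d n y) = oid d n"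
proof (intro ext)
  fix i k
  assume d: "0 < d" and y: "length y = n"
  have "omul d n (oadj (Xop d n y)) (Xop d n y) i k =
    (\<Sum>j\<in>Zdn d n. if j = vadd d i y then
       (if i \<in> Zdn d n \<and> k \<in> Zdn d n \<and> vadd d i y = vadd d k y then 1 else 0) else 0)"
    unfolding omul_def oadj_def Xop_def by (rule sum.cong) auto
  also have "\<dots> = oid d n i k"
    using d y by (auto simp: oid_def intro: vadd_in_Zdn dest: length_Zdn vadd_right_cancel)
  finally show "omul d n (oadj (Xop d n y)) (Xop d n y) i k = oid d n i k" .
qed

lemma Zop_unitary: "omul d n (oadj (Zop d n c)) (Zop d n c) = oid d n"
proof (intro ext)
  fix i k
  have "omul d n (oadj (Zop d n c)) (Zop d n c) i k =
    (\<Sum>j\<in>Zdn d n. if j = i then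
       (if i \<in> Zdn d n \<and> i = k then cnj (omega d (vdot c i)) * omega d (vdot c i) else 0) else 0)"
    unfolding omul_def oadj_def Zop_omega by (rule sum.cong) auto
  also have "\<dots> = oid d n i k"
    by (auto simp: oid_def omega_mult_cnj mult.commute)
  finally show "omul d n (oadj (Zop d n c)) (Zop d n c) i k = oid d n i k" .
qed

lemma otr_conjop_Xop:
  "0 < d \<Longrightarrow> length y = n \<Longrightarrow> otr d n (conjop d n (Xop d n y) \<sigma>) = otr d n \<sigma>"
  by (simp add: Xop_unitary otr_conjop_unitary)

lemma otr_conjop_Zop: "otr d n (conjop d n (Zop d n c) \<sigma>) = otr d n \<sigma>"
  by (simp add: Zop_unitary otr_conjop_unitary)

lemma Xop_omul_Xop:
  "0 < d \<Longrightarrow> length a = n \<Longrightarrow> length b = n \<Longrightarrow>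
   omul d n (Xop d n a) (Xop d n b) = Xop d n (vadd d b a)"
proof (intro ext)
  fix i k
  assume d: "0 < d" and a: "length a = n" and b: "length b = n"
  have "omul d n (Xop d n a) (Xop d n b) i k =
    (\<Sum>j\<in>Zdn d n. if j = vadd d k b then
       (if i \<in> Zdn d n \<and> k \<in> Zdn d n \<and> i = vadd d (vadd d k b) a then 1 else 0) else 0)"
    unfolding omul_def Xop_def by (rule sum.cong) auto
  also have "\<dots> = Xop d n (vadd d b a) i k"
    using d a b by (auto simp: Xop_def vadd_assoc dest: length_Zdn intro: vadd_in_Zdn)
  finally show "omul d n (Xop d n a) (Xop d n b) i k = Xop d n (vadd d b a) i k" .
qed

lemma Zop_omul_Zop:
  "0 < d \<Longrightarrow> length b = n \<Longrightarrow> length c = n \<Longrightarrow>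
   omul d n (Zop d n b) (Zop d n c) = Zop d n (vadd d b c)"
proof (intro ext)
  fix i k
  assume d: "0 < d" and b: "length b = n" and c: "length c = n"
  have "omul d n (Zop d n b) (Zop d n c) i k =
    (\<Sum>j\<in>Zdn d n. if j = i then
       (if i \<in> Zdn d n \<and> i = k then omega d (vdot b k) * omega d (vdot c k) else 0) else 0)"
    unfolding omul_def Zop_omega by (rule sum.cong) auto
  also have "\<dots> = Zop d n (vadd d b c) i k"
    using d b c by (auto simp: Zop_omega omega_vdot_vadd_left dest: length_Zdn)
  finally show "omul d n (Zop d n b) (Zop d n c) i k = Zop d n (vadd d b c) i k" .
qed

lemma Xop_omul_Zop:
  "omul d n (Xop d n y) (Zop d n c) =
   (\<lambda>i k. if i \<in> Zdn d n \<and> k \<in> Zdn d n \<and> i = vadd d k y then omega d (vdot c k) else 0)"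
proof (intro ext)
  fix i k
  have "omul d n (Xop d n y) (Zop d n c) i k =
    (\<Sum>j\<in>Zdn d n. if j = k then
       (if i \<in> Zdn d n \<and> k \<in> Zdn d n \<and> i = vadd d k y then omega d (vdot c k) else 0) else 0)"
    unfolding omul_def Zop_omega Xop_def by (rule sum.cong) auto
  then show "omul d n (Xop d n y) (Zop d n c) i k =
     (if i \<in> Zdn d n \<and> k \<in> Zdn d n \<and> i = vadd d k y then omega d (vdot c k) else 0)"
    by auto
qed

lemma Zop_omul_Xop:
  "0 < d \<Longrightarrow> length y = n \<Longrightarrow> length c = n \<Longrightarrow>
   omul d n (Zop d n c) (Xop d n y) =
   oscale (omega d (vdot c y)) (omul d n (Xop d n y) (Zop d n c))"
proof (intro ext)
  fix i k
  assume d: "0 < d" and y: "length y = n" and c: "length c = n"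
  have "omul d n (Zop d n c) (Xop d n y) i k =
    (\<Sum>j\<in>Zdn d n. if j = i then
       (if i \<in> Zdn d n \<and> k \<in> Zdn d n \<and> i = vadd d k y then omega d (vdot c i) else 0) else 0)"
    unfolding omul_def Zop_omega Xop_def by (rule sum.cong) auto
  also have "\<dots> = oscale (omega d (vdot c y)) (omul d n (Xop d n y) (Zop d n c)) i k"
    using d y c
    by (auto simp: Xop_omul_Zop oscale_def omega_vdot_vadd_right mult.commute dest: length_Zdn)
  finally show "omul d n (Zop d n c) (Xop d n y) i k =
      oscale (omega d (vdot c y)) (omul d n (Xop d n y) (Zop d n c)) i k" .
qed

lemma conjop_Xop_Zop_commute:
  "0 < d \<Longrightarrow> length y = n \<Longrightarrow> length c = n \<Longrightarrow>
   conjop d n (Xop d n y) (conjop d n (Zop d n c) \<sigma>) =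
   conjop d n (Zop d n c) (conjop d n (Xop d n y) \<sigma>)"
  by (simp add: conjop_conjop Zop_omul_Xop conjop_oscale omega_mult_cnj)

lemma conjop_Zop_Zop:
  "0 < d \<Longrightarrow> length b = n \<Longrightarrow> length c = n \<Longrightarrow>
   conjop d n (Zop d n b) (conjop d n (Zop d n c) \<sigma>) = conjop d n (Zop d n (vadd d b c)) \<sigma>"
  by (simp add: conjop_conjop Zop_omul_Zop)

lemma conjop_Xop_Xop:
  "0 < d \<Longrightarrow> length a = n \<Longrightarrow> length b = n \<Longrightarrow>
   conjop d n (Xop d n a) (conjop d n (Xop d n b) \<sigma>) = conjop d n (Xop d n (vadd d b a)) \<sigma>"
  by (simp add: conjop_conjop Xop_omul_Xop)

definition superop_linear :: "(op \<Rightarrow> op) \<Rightarrow> bool" where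
  "superop_linear f \<longleftrightarrow>
     (\<forall>\<sigma> \<tau>. f (\<lambda>i j. \<sigma> i j + \<tau> i j) = (\<lambda>i j. f \<sigma> i j + f \<tau> i j)) \<and>
     (\<forall>c \<sigma>. f (oscale c \<sigma>) = oscale c (f \<sigma>))"

lemma superop_linear_add:
  "superop_linear f \<Longrightarrow> f (\<lambda>i j. \<sigma> i j + \<tau> i j) = (\<lambda>i j. f \<sigma> i j + f \<tau> i j)"
  by (simp add: superop_linear_def)

lemma superop_linear_oscale: "superop_linear f \<Longrightarrow> f (oscale c \<sigma>) = oscale c (f \<sigma>)"
  by (simp add: superop_linear_def)

lemma superop_linear_zero: "superop_linear f \<Longrightarrow> f (\<lambda>i j. 0) = (\<lambda>i j. 0)"
  using superop_linear_oscale[of f 0 "\<lambda>i j. 0"] by (simp add: oscale_def)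

lemma superop_linear_sum:
  assumes f: "superop_linear f" and S: "finite S"
  shows "f (\<lambda>i j. \<Sum>s\<in>S. g s i j) = (\<lambda>i j. \<Sum>s\<in>S. f (g s) i j)"
  using S
proof (induction S rule: finite_induct)
  case empty then show ?case using f by (simp add: superop_linear_zero)
next
  case (insert x F)
  then show ?case
    using superop_linear_add[OF f, of "g x" "\<lambda>i j. \<Sum>s\<in>F. g s i j"] by simp
qed

lemma superop_linear_id: "superop_linear (\<lambda>\<sigma>. \<sigma>)"
  by (simp add: superop_linear_def)

lemma superop_linear_comp:
  "superop_linear f \<Longrightarrow> superop_linear g \<Longrightarrow> superop_linear (\<lambda>\<sigma>. f (g \<sigma>))"
  by (simp add: superop_linear_def)

lemma superop_linear_plus:
  "superop_linear f \<Longrightarrow> superop_linear g \<Longrightarrow> superop_linear (\<lambda>\<sigma> i j. f \<sigma> i j + g \<sigma> i j)"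
  unfolding superop_linear_def oscale_def by (simp add: fun_eq_iff distrib_left)

lemma superop_linear_sum_fun:
  "finite S \<Longrightarrow> (\<And>s. s \<in> S \<Longrightarrow> superop_linear (G s)) \<Longrightarrow>
   superop_linear (\<lambda>\<sigma> i j. \<Sum>s\<in>S. G s \<sigma> i j)"
  unfolding superop_linear_def oscale_def by (simp add: sum.distrib sum_distrib_left fun_eq_iff)

lemma superop_linear_oscale_fun: "superop_linear f \<Longrightarrow> superop_linear (\<lambda>\<sigma>. oscale c (f \<sigma>))"
  unfolding superop_linear_def oscale_def by (simp add: fun_eq_iff distrib_left mult_ac)

lemma superop_linear_conjop: "superop_linear (conjop d n A)"
  unfolding superop_linear_def conjop_def
  by (simp add: omul_add_left omul_add_right omul_oscale_left omul_oscale_right)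

lemma superop_linear_kraus: "superop_linear (\<lambda>\<sigma> i j. \<Sum>A\<leftarrow>Ks. conjop d n A \<sigma> i j)"
proof (induction Ks)
  case Nil then show ?case by (simp add: superop_linear_def oscale_def)
next
  case (Cons A Ks)
  then show ?case using superop_linear_plus[OF superop_linear_conjop] by simp
qed

lemma instrument_superop_linear:
  assumes "instrument d n M" "u \<in> Zdn d n"
  shows "superop_linear (M u)"
proof -
  obtain Ks where "\<forall>\<sigma>. M u \<sigma> = (\<lambda>i j. \<Sum>A\<leftarrow>Ks. conjop d n A \<sigma> i j)"
    using assms unfolding instrument_def by blast
  then have "M u = (\<lambda>\<sigma> i j. \<Sum>A\<leftarrow>Ks. conjop d n A \<sigma> i j)"
    by blast
  then show ?thesis by (simp add: superop_linear_kraus)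
qed

lemma superop_linear_Mhat:
  assumes "0 < d" "length k = n" "instrument d n M"
  shows "superop_linear (Mhat d n M k)"
  unfolding Mhat_def[abs_def]
proof (intro superop_linear_oscale_fun superop_linear_sum_fun finite_Zdn)
  fix a b x assume "x \<in> Zdn d n"
  then have "superop_linear (M (vsub d k x))"
    using assms by (simp add: instrument_superop_linear vsub_in_Zdn length_Zdn)
  then show "superop_linear (\<lambda>\<sigma>. conjop d n (Xop d n x) (conjop d n (Zop d n a)
      (M (vsub d k x) (conjop d n (Zop d n b) (conjop d n (Xop d n (vneg d x)) \<sigma>)))))"
    by (intro superop_linear_comp[OF superop_linear_conjop]
        superop_linear_comp[OF _ superop_linear_conjop])
qed

lemma superop_linear_foldl_Mhat:
  "0 < d \<Longrightarrow> set ks \<subseteq> Zdn d n \<Longrightarrow> instrument d n M \<Longrightarrow>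
   superop_linear (\<lambda>\<sigma>. foldl (\<lambda>\<sigma> k. Mhat d n M k \<sigma>) \<sigma> ks)"
proof (induction ks)
  case Nil then show ?case by (simp add: superop_linear_id)
next
  case (Cons k ks)
  then have "superop_linear (\<lambda>\<sigma>. foldl (\<lambda>\<sigma> k. Mhat d n M k \<sigma>) \<sigma> ks)"
    and "superop_linear (Mhat d n M k)"
    by (auto intro: superop_linear_Mhat length_Zdn)
  then show ?case using superop_linear_comp by fastforce
qed

section \<open>Positivity and trace\<close>

definition qform :: "nat \<Rightarrow> nat \<Rightarrow> op \<Rightarrow> (nat list \<Rightarrow> complex) \<Rightarrow> complex" where
  "qform d n \<sigma> v = (\<Sum>i\<in>Zdn d n. \<Sum>j\<in>Zdn d n. cnj (v i) * \<sigma> i j * v j)"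

definition psd :: "nat \<Rightarrow> nat \<Rightarrow> op \<Rightarrow> bool" where
  "psd d n \<sigma> \<longleftrightarrow> (\<forall>v. qform d n \<sigma> v \<in> \<real> \<and> 0 \<le> Re (qform d n \<sigma> v))"

lemma density_iff_psd: "density d n \<rho> \<longleftrightarrow> psd d n \<rho> \<and> otr d n \<rho> = 1"
  by (simp add: density_def psd_def qform_def)

lemma psd_zero: "psd d n (\<lambda>i j. 0)"
  by (simp add: psd_def qform_def)

lemma psd_add: "psd d n \<sigma> \<Longrightarrow> psd d n \<tau> \<Longrightarrow> psd d n (\<lambda>i j. \<sigma> i j + \<tau> i j)"
  by (simp add: psd_def qform_def distrib_left distrib_right sum.distrib)

lemma qform_oscale: "qform d n (oscale c \<sigma>) v = c * qform d n \<sigma> v"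
  by (simp add: qform_def oscale_def sum_distrib_left mult_ac)

lemma psd_oscale: "psd d n \<sigma> \<Longrightarrow> 0 \<le> r \<Longrightarrow> psd d n (oscale (of_real r) \<sigma>)"
  by (simp add: psd_def qform_oscale)

lemma sum_swap_outer_pairs:
  "(\<Sum>a\<in>A. \<Sum>b\<in>B. \<Sum>c\<in>C. \<Sum>e\<in>E. f a b c e) = (\<Sum>c\<in>C. \<Sum>e\<in>E. \<Sum>a\<in>A. \<Sum>b\<in>B. f a b c e)"
proof -
  have "(\<Sum>a\<in>A. \<Sum>b\<in>B. \<Sum>c\<in>C. \<Sum>e\<in>E. f a b c e) = (\<Sum>a\<in>A. \<Sum>c\<in>C. \<Sum>b\<in>B. \<Sum>e\<in>E. f a b c e)"
    by (intro sum.cong refl sum.swap)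
  also have "\<dots> = (\<Sum>a\<in>A. \<Sum>c\<in>C. \<Sum>e\<in>E. \<Sum>b\<in>B. f a b c e)"
    by (intro sum.cong refl sum.swap)
  also have "\<dots> = (\<Sum>c\<in>C. \<Sum>a\<in>A. \<Sum>e\<in>E. \<Sum>b\<in>B. f a b c e)"
    by (rule sum.swap)
  also have "\<dots> = (\<Sum>c\<in>C. \<Sum>e\<in>E. \<Sum>a\<in>A. \<Sum>b\<in>B. f a b c e)"
    by (intro sum.cong refl sum.swap)
  finally show ?thesis .
qed

lemma qform_conjop:
  "qform d n (conjop d n A \<sigma>) v = qform d n \<sigma> (\<lambda>k. \<Sum>j\<in>Zdn d n. cnj (A j k) * v j)"
proof -
  let ?Z = "Zdn d n"
  let ?F = "\<lambda>i j k l. cnj (v i) * A i k * \<sigma> k l * (cnj (A j l) * v j)"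
  have "qform d n (conjop d n A \<sigma>) v = (\<Sum>i\<in>?Z. \<Sum>j\<in>?Z. \<Sum>l\<in>?Z. \<Sum>k\<in>?Z. ?F i j k l)"
    by (simp add: qform_def conjop_def omul_def oadj_def sum_distrib_left sum_distrib_right mult_ac)
  also have "\<dots> = (\<Sum>l\<in>?Z. \<Sum>k\<in>?Z. \<Sum>i\<in>?Z. \<Sum>j\<in>?Z. ?F i j k l)"
    by (rule sum_swap_outer_pairs)
  also have "\<dots> = (\<Sum>k\<in>?Z. \<Sum>l\<in>?Z. \<Sum>i\<in>?Z. \<Sum>j\<in>?Z. ?F i j k l)"
    by (rule sum.swap)
  also have "\<dots> = qform d n \<sigma> (\<lambda>k. \<Sum>j\<in>?Z. cnj (A j k) * v j)"
    by (simp add: qform_def sum_distrib_left sum_distrib_right mult_ac)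
  finally show ?thesis .
qed

lemma psd_conjop: "psd d n \<sigma> \<Longrightarrow> psd d n (conjop d n A \<sigma>)"
  by (simp add: psd_def qform_conjop)

lemma psd_kraus: "psd d n \<sigma> \<Longrightarrow> psd d n (\<lambda>i j. \<Sum>A\<leftarrow>Ks. conjop d n A \<sigma> i j)"
  by (induction Ks) (simp_all add: psd_zero psd_add psd_conjop)

lemma instrument_psd:
  assumes "instrument d n M" "u \<in> Zdn d n" "psd d n \<sigma>"
  shows "psd d n (M u \<sigma>)"
proof -
  obtain Ks where "\<forall>\<sigma>. M u \<sigma> = (\<lambda>i j. \<Sum>A\<leftarrow>Ks. conjop d n A \<sigma> i j)"
    using assms unfolding instrument_def by blast
  then show ?thesis using psd_kraus[OF assms(3)] by simp
qed

lemma psd_diag: "psd d n \<sigma> \<Longrightarrow> j \<in> Zdn d n \<Longrightarrow> \<sigma> j j \<in> \<real> \<and> 0 \<le> Re (\<sigma> j j)"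
proof -
  assume psd: "psd d n \<sigma>" and j: "j \<in> Zdn d n"
  have "qform d n \<sigma> (\<lambda>i. if i = j then 1 else 0) = \<sigma> j j"
    using j unfolding qform_def
    by (simp add: if_distrib[of cnj] if_distrib[of "\<lambda>a. _ * a"] if_distrib[of "\<lambda>a. a * _"]
        cong: if_cong)
  then show ?thesis using psd unfolding psd_def by metis
qed

lemma psd_otr: "psd d n \<sigma> \<Longrightarrow> otr d n \<sigma> \<in> \<real> \<and> 0 \<le> Re (otr d n \<sigma>)"
  unfolding otr_def using psd_diag by (auto intro!: sum_in_Reals sum_nonneg simp: Re_sum)

lemma instrument_otr_le:
  assumes M: "instrument d n M" and u: "u \<in> Zdn d n" and \<sigma>: "psd d n \<sigma>"
  shows "Re (otr d n (M u \<sigma>)) \<le> Re (otr d n \<sigma>)"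
proof -
  have "Re (otr d n \<sigma>) = (\<Sum>u\<in>Zdn d n. Re (otr d n (M u \<sigma>)))"
    using M unfolding instrument_def by (simp flip: Re_sum)
  moreover have "Re (otr d n (M u \<sigma>)) \<le> (\<Sum>u\<in>Zdn d n. Re (otr d n (M u \<sigma>)))"
    using u M \<sigma> by (intro member_le_sum) (auto dest: instrument_psd psd_otr)
  ultimately show ?thesis by simp
qed

text \<open>The gate Z^beta_i X^(alpha_(i-1) - alpha_i) of round i, for a' = alpha_(i-1), a = alpha_i
  and b = beta_i.\<close>

definition gate :: "nat \<Rightarrow> nat \<Rightarrow> nat list \<Rightarrow> nat list \<Rightarrow> nat list \<Rightarrow> op" where
  "gate d n a' a b = omul d n (Zop d n b) (Xop d n (vsub d a' a))"

lemma otr_conjop_gate: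
  "0 < d \<Longrightarrow> a' \<in> Zdn d n \<Longrightarrow> a \<in> Zdn d n \<Longrightarrow> otr d n (conjop d n (gate d n a' a b) \<tau>) = otr d n \<tau>"
  unfolding gate_def conjop_conjop[symmetric]
  by (simp add: otr_conjop_Zop otr_conjop_Xop vsub_def length_Zdn)

text \<open>The unnormalised state after a run: seqprob without its renormalisations.\<close>

fun run_state :: "nat \<Rightarrow> nat \<Rightarrow> (nat list \<Rightarrow> op \<Rightarrow> op) \<Rightarrow> nat list \<Rightarrow> op
                   \<Rightarrow> nat list list \<Rightarrow> nat list list \<Rightarrow> nat list list \<Rightarrow> op" where
  "run_state d n M a' \<sigma> (a # as) (b # bs) (u # os) =
     run_state d n M a (M u (conjop d n (gate d n a' a b) \<sigma>)) as bs os"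
| "run_state d n M a' \<sigma> _ _ _ = \<sigma>"

lemma superop_linear_run_state:
  "instrument d n M \<Longrightarrow> set os \<subseteq> Zdn d n \<Longrightarrow> superop_linear (\<lambda>\<sigma>. run_state d n M a' \<sigma> as bs os)"
proof (induction d n M a' _ as bs os rule: run_state.induct)
  case (1 d n M a' \<sigma> a as b bs u os)
  then have "superop_linear (\<lambda>\<sigma>. run_state d n M a \<sigma> as bs os)"
    and "superop_linear (\<lambda>\<sigma>. M u (conjop d n (gate d n a' a b) \<sigma>))"
    by (auto intro: superop_linear_comp[OF instrument_superop_linear superop_linear_conjop])
  then show ?case using superop_linear_comp by fastforce
qed (simp_all add: superop_linear_id)

lemma run_state_psd_otr_le:
  assumes "0 < d" "instrument d n M" "a' \<in> Zdn d n" "set as \<subseteq> Zdn d n" "set os \<subseteq> Zdn d n"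
    and "psd d n \<tau>"
  shows "psd d n (run_state d n M a' \<tau> as bs os) \<and>
         Re (otr d n (run_state d n M a' \<tau> as bs os)) \<le> Re (otr d n \<tau>)"
  using assms
proof (induction d n M a' \<tau> as bs os rule: run_state.induct)
  case (1 d n M a' \<tau> a as b bs u os)
  let ?\<mu> = "M u (conjop d n (gate d n a' a b) \<tau>)"
  have "psd d n ?\<mu>"
    using 1 by (simp add: instrument_psd psd_conjop)
  moreover have "Re (otr d n ?\<mu>) \<le> Re (otr d n \<tau>)"
    using 1 instrument_otr_le[of d n M u "conjop d n (gate d n a' a b) \<tau>"]
    by (simp add: psd_conjop otr_conjop_gate)
  ultimately show ?case
    using "1.IH" "1.prems" by fastforce
qed simp_all

lemma seqprob_eq_otr_run_state:
  assumes "0 < d" "instrument d n M"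
  shows "a' \<in> Zdn d n \<Longrightarrow> set as \<subseteq> Zdn d n \<Longrightarrow> set os \<subseteq> Zdn d n \<Longrightarrow>
    length bs = length as \<Longrightarrow> length os = length as \<Longrightarrow> psd d n \<tau> \<Longrightarrow> otr d n \<tau> = 1 \<Longrightarrow>
    seqprob d n M \<tau> a' as bs os = otr d n (run_state d n M a' \<tau> as bs os)"
proof (induction as arbitrary: a' \<tau> bs os)
  case (Cons a as)
  then obtain b bs' u os' where bs: "bs = b # bs'" and os: "os = u # os'"
    by (metis length_Suc_conv)
  let ?\<mu> = "M u (conjop d n (gate d n a' a b) \<tau>)"
  let ?p = "otr d n ?\<mu>"
  let ?R = "run_state d n M a ?\<mu> as bs' os'"
  have \<mu>: "psd d n ?\<mu>"
    using Cons.prems assms os by (simp add: instrument_psd psd_conjop)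
  have seqprob: "seqprob d n M \<tau> a' (a # as) bs os =
      ?p * seqprob d n M (oscale (1 / ?p) ?\<mu>) a as bs' os'"
    by (simp add: bs os Let_def gate_def)
  have run_state: "run_state d n M a' \<tau> (a # as) bs os = ?R"
    by (simp add: bs os)
  show ?case
  proof (cases "?p = 0")
    case True
    have "psd d n ?R" "Re (otr d n ?R) \<le> Re ?p"
      using run_state_psd_otr_le[OF assms _ _ _ \<mu>, of a as os' bs'] Cons.prems os by auto
    then have "otr d n ?R = 0"
      using True psd_otr[of d n ?R] by (simp add: complex_eq_iff complex_is_Real_iff)
    then show ?thesis using seqprob run_state True by simp
  next
    case False
    from psd_otr[OF \<mu>] have inv: "1 / ?p = of_real (1 / Re ?p)" and inv_nonneg: "0 \<le> 1 / Re ?p"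
      by (auto simp: complex_is_Real_iff complex_eq_iff)
    have "psd d n (oscale (1 / ?p) ?\<mu>)"
      unfolding inv using \<mu> inv_nonneg by (rule psd_oscale)
    moreover have "otr d n (oscale (1 / ?p) ?\<mu>) = 1"
      using False by (simp add: otr_oscale)
    ultimately have "seqprob d n M (oscale (1 / ?p) ?\<mu>) a as bs' os' =
        otr d n (run_state d n M a (oscale (1 / ?p) ?\<mu>) as bs' os')"
      using Cons bs os by simp
    also have "\<dots> = (1 / ?p) * otr d n ?R"
      using superop_linear_oscale[OF superop_linear_run_state] assms Cons.prems os
      by (simp add: otr_oscale)
    finally show ?thesis using seqprob run_state False by simp
  qed
qed simp

section \<open>Random compilation\<close>

definition compiled_prob ::
  "nat \<Rightarrow> nat \<Rightarrow> (nat list \<Rightarrow> op \<Rightarrow> op) \<Rightarrow> op \<Rightarrow> nat list list \<Rightarrow> complex" where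
  "compiled_prob d n M \<sigma> ks = otr d n (foldl (\<lambda>\<sigma> k. Mhat d n M k \<sigma>) \<sigma> ks)"

lemma compiled_prob_Nil [simp]: "compiled_prob d n M \<sigma> [] = otr d n \<sigma>"
  by (simp add: compiled_prob_def)

lemma compiled_prob_Cons [simp]:
  "compiled_prob d n M \<sigma> (k # ks) = compiled_prob d n M (Mhat d n M k \<sigma>) ks"
  by (simp add: compiled_prob_def)

lemma compiled_prob_oscale:
  "0 < d \<Longrightarrow> set ks \<subseteq> Zdn d n \<Longrightarrow> instrument d n M \<Longrightarrow>
   compiled_prob d n M (oscale c \<sigma>) ks = c * compiled_prob d n M \<sigma> ks"
  unfolding compiled_prob_def
  by (simp add: superop_linear_oscale[OF superop_linear_foldl_Mhat] otr_oscale)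

lemma compiled_prob_sum:
  "0 < d \<Longrightarrow> set ks \<subseteq> Zdn d n \<Longrightarrow> instrument d n M \<Longrightarrow> finite S \<Longrightarrow>
   compiled_prob d n M (\<lambda>i j. \<Sum>s\<in>S. g s i j) ks = (\<Sum>s\<in>S. compiled_prob d n M (g s) ks)"
  unfolding compiled_prob_def
  by (simp add: superop_linear_sum[OF superop_linear_foldl_Mhat] otr_sum)

lemma Mhat_conjop_Zop:
  assumes d: "0 < d" and c: "c \<in> Zdn d n"
  shows "Mhat d n M k (conjop d n (Zop d n c) \<sigma>) = Mhat d n M k \<sigma>"
proof -
  let ?H = "\<lambda>a b x. conjop d n (Xop d n x) (conjop d n (Zop d n a)
              (M (vsub d k x) (conjop d n (Zop d n b) (conjop d n (Xop d n (vneg d x)) \<sigma>))))"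
  have "conjop d n (Zop d n b) (conjop d n (Xop d n (vneg d x)) (conjop d n (Zop d n c) \<sigma>)) =
        conjop d n (Zop d n (vadd d b c)) (conjop d n (Xop d n (vneg d x)) \<sigma>)"
    if "b \<in> Zdn d n" "x \<in> Zdn d n" for b x
    using d c that by (simp add: conjop_Xop_Zop_commute conjop_Zop_Zop length_Zdn)
  moreover have "(\<Sum>b\<in>Zdn d n. \<Sum>x\<in>Zdn d n. ?H a (vadd d b c) x r r') =
                 (\<Sum>b\<in>Zdn d n. \<Sum>x\<in>Zdn d n. ?H a b x r r')" for a r r'
    by (rule sum.reindex_bij_betw[OF bij_betw_vadd_right[OF d length_Zdn[OF c]]])
  ultimately show ?thesis
    unfolding Mhat_def by simp
qed

lemma compiled_prob_conjop_Zop: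
  "0 < d \<Longrightarrow> c \<in> Zdn d n \<Longrightarrow>
   compiled_prob d n M (conjop d n (Zop d n c) \<sigma>) ks = compiled_prob d n M \<sigma> ks"
  by (cases ks) (simp_all add: otr_conjop_Zop Mhat_conjop_Zop)

text \<open>Conjugation by X^0 is not the identity on op: it truncates to Z_d^n x Z_d^n, which the
  first conjugation inside Mhat does anyway.\<close>

lemma compiled_prob_conjop_Xop_vzero:
  assumes d: "0 < d"
  shows "compiled_prob d n M (conjop d n (Xop d n (vzero n)) \<sigma>) ks = compiled_prob d n M \<sigma> ks"
proof (cases ks)
  case Nil
  then show ?thesis using d by (simp add: otr_conjop_Xop)
next
  case (Cons k ks')
  have "conjop d n (Xop d n (vneg d x)) (conjop d n (Xop d n (vzero n)) \<sigma>) =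
        conjop d n (Xop d n (vneg d x)) \<sigma>"
    if "x \<in> Zdn d n" for x
    using d that by (simp add: conjop_Xop_Xop vzero_vadd vneg_in_Zdn length_Zdn)
  then show ?thesis
    using Cons by (simp add: Mhat_def)
qed

lemma sum_seqs_Suc:
  "(\<Sum>xs\<in>seqs d n (Suc m). f xs) = (\<Sum>a\<in>Zdn d n. \<Sum>as\<in>seqs d n m. f (a # as))"
proof -
  have seqs: "seqs d n (Suc m) = (\<lambda>(a, as). a # as) ` (Zdn d n \<times> seqs d n m)"
    by (auto simp: seqs_def length_Suc_conv)
  have "inj_on (\<lambda>(a, as). a # as) (Zdn d n \<times> seqs d n m)"
    by (auto intro: inj_onI)
  then have "(\<Sum>xs\<in>seqs d n (Suc m). f xs) = (\<Sum>(a, as)\<in>Zdn d n \<times> seqs d n m. f (a # as))"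
    unfolding seqs by (subst sum.reindex) (simp_all add: case_prod_beta)
  then show ?thesis
    by (simp add: sum.cartesian_product)
qed

lemma sum3_seqs_Suc:
  "(\<Sum>\<alpha>\<in>seqs d n (Suc m). \<Sum>\<beta>\<in>seqs d n (Suc m). \<Sum>os\<in>seqs d n (Suc m). f \<alpha> \<beta> os) =
   (\<Sum>a\<in>Zdn d n. \<Sum>b\<in>Zdn d n. \<Sum>u\<in>Zdn d n.
      \<Sum>as\<in>seqs d n m. \<Sum>bs\<in>seqs d n m. \<Sum>os\<in>seqs d n m. f (a # as) (b # bs) (u # os))"
  (is "_ = (\<Sum>a\<in>?Z. ?rhs a)")
proof -
  let ?S = "seqs d n m"
  have "(\<Sum>\<alpha>\<in>seqs d n (Suc m). \<Sum>\<beta>\<in>seqs d n (Suc m). \<Sum>os\<in>seqs d n (Suc m). f \<alpha> \<beta> os) =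
     (\<Sum>a\<in>?Z. \<Sum>as\<in>?S. \<Sum>b\<in>?Z. \<Sum>bs\<in>?S. \<Sum>u\<in>?Z. \<Sum>os\<in>?S. f (a # as) (b # bs) (u # os))"
    by (simp add: sum_seqs_Suc)
  also have "\<dots> = (\<Sum>a\<in>?Z. \<Sum>b\<in>?Z. \<Sum>as\<in>?S. \<Sum>bs\<in>?S. \<Sum>u\<in>?Z. \<Sum>os\<in>?S. f (a # as) (b # bs) (u # os))"
    by (intro sum.cong refl sum.swap)
  also have "\<dots> = (\<Sum>a\<in>?Z. \<Sum>b\<in>?Z. \<Sum>as\<in>?S. \<Sum>u\<in>?Z. \<Sum>bs\<in>?S. \<Sum>os\<in>?S. f (a # as) (b # bs) (u # os))"
    by (intro sum.cong refl sum.swap)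
  also have "\<dots> = (\<Sum>a\<in>?Z. ?rhs a)"
    by (intro sum.cong refl sum.swap)
  finally show ?thesis .
qed

text \<open>
  routine_prob generalised to an arbitrary previous shift a' in place of alpha_0 = 0, with
  the probability of a run already expressed through run_state.
\<close>

definition shifted_routine_prob ::
  "nat \<Rightarrow> nat \<Rightarrow> (nat list \<Rightarrow> op \<Rightarrow> op) \<Rightarrow> op \<Rightarrow> nat list \<Rightarrow> nat list list \<Rightarrow> complex" where
  "shifted_routine_prob d n M \<sigma> a' ks =
     (\<Sum>\<alpha>\<in>seqs d n (length ks). \<Sum>\<beta>\<in>seqs d n (length ks). \<Sum>os\<in>seqs d n (length ks).
        if map2 (vadd d) \<alpha> os = ks
        then (1 / (of_nat d) ^ (2 * n)) ^ length ks * otr d n (run_state d n M a' \<sigma> \<alpha> \<beta> os)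
        else 0)"

lemma shifted_routine_prob_Nil: "shifted_routine_prob d n M \<sigma> a' [] = otr d n \<sigma>"
proof -
  have "seqs d n 0 = {[]}"
    by (auto simp: seqs_def)
  then show ?thesis
    by (simp add: shifted_routine_prob_def)
qed

lemma shifted_routine_prob_Cons:
  assumes d: "0 < d" and k: "k \<in> Zdn d n"
  shows "shifted_routine_prob d n M \<sigma> a' (k # ks) = (1 / (of_nat d) ^ (2 * n)) *
     (\<Sum>a\<in>Zdn d n. \<Sum>b\<in>Zdn d n.
        shifted_routine_prob d n M (M (vsub d k a) (conjop d n (gate d n a' a b) \<sigma>)) a ks)"
proof -
  let ?c = "1 / (of_nat d) ^ (2 * n) :: complex"
  have "shifted_routine_prob d n M \<sigma> a' (k # ks) =
     (\<Sum>a\<in>Zdn d n. \<Sum>b\<in>Zdn d n. \<Sum>u\<in>Zdn d n. if vadd d a u = k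
        then ?c * shifted_routine_prob d n M (M u (conjop d n (gate d n a' a b) \<sigma>)) a ks else 0)"
    unfolding shifted_routine_prob_def
    by (auto simp: sum3_seqs_Suc sum_distrib_left intro!: sum.cong)
  also have "\<dots> = (\<Sum>a\<in>Zdn d n. \<Sum>b\<in>Zdn d n.
      ?c * shifted_routine_prob d n M (M (vsub d k a) (conjop d n (gate d n a' a b) \<sigma>)) a ks)"
    using d k by (intro sum.cong refl) (simp add: sum_vadd_eq)
  finally show ?thesis
    by (simp add: sum_distrib_left)
qed

lemma conjop_Zop_Xop_Xop_eq_gate:
  assumes "0 < d" "a' \<in> Zdn d n" "x \<in> Zdn d n"
  shows "conjop d n (Zop d n b) (conjop d n (Xop d n (vneg d x)) (conjop d n (Xop d n a') \<sigma>)) =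
         conjop d n (gate d n a' x b) \<sigma>"
proof -
  have "conjop d n (Xop d n (vneg d x)) (conjop d n (Xop d n a') \<sigma>) =
        conjop d n (Xop d n (vsub d a' x)) \<sigma>"
    using assms by (simp add: conjop_Xop_Xop vsub_def length_Zdn)
  then show ?thesis
    by (simp add: conjop_conjop gate_def)
qed

lemma shifted_routine_prob_eq_compiled_prob:
  assumes d: "0 < d" and M: "instrument d n M"
  shows "a' \<in> Zdn d n \<Longrightarrow> set ks \<subseteq> Zdn d n \<Longrightarrow>
    shifted_routine_prob d n M \<sigma> a' ks = compiled_prob d n M (conjop d n (Xop d n a') \<sigma>) ks"
proof (induction ks arbitrary: \<sigma> a')
  case Nil
  then show ?case using d by (simp add: shifted_routine_prob_Nil otr_conjop_Xop length_Zdn)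
next
  case (Cons k ks)
  let ?Z = "Zdn d n"
  let ?W = "\<lambda>b x. compiled_prob d n M
              (conjop d n (Xop d n x) (M (vsub d k x) (conjop d n (gate d n a' x b) \<sigma>))) ks"
  have k: "k \<in> ?Z" and ks: "set ks \<subseteq> ?Z"
    using Cons.prems by auto
  have "shifted_routine_prob d n M \<sigma> a' (k # ks) =
      1 / of_nat d ^ (2 * n) * (\<Sum>a\<in>?Z. \<Sum>b\<in>?Z. ?W b a)"
    using Cons.IH[OF _ ks] by (simp add: shifted_routine_prob_Cons[OF d k])
  also have "\<dots> = 1 / of_nat d ^ (2 * n) * (\<Sum>b\<in>?Z. \<Sum>x\<in>?Z. ?W b x)"
    by (subst sum.swap) (rule refl)
  also have "\<dots> = 1 / of_nat d ^ (3 * n) * (of_nat d ^ n * (\<Sum>b\<in>?Z. \<Sum>x\<in>?Z. ?W b x))"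
  proof -
    have "1 / of_nat d ^ (3 * n) * of_nat d ^ n = (1 / of_nat d ^ (2 * n) :: complex)"
      using d by (simp add: field_simps power_add[symmetric] mult_2 add.commute)
    then show ?thesis by (simp only: mult.assoc[symmetric])
  qed
  also have "\<dots> = 1 / of_nat d ^ (3 * n) * (\<Sum>a\<in>?Z. \<Sum>b\<in>?Z. \<Sum>x\<in>?Z. ?W b x)"
    by (simp add: card_Zdn)
  \<comment> \<open>The Z^a of the compiled instrument commutes past X^x and vanishes in the trace of the
    remaining compiled rounds.\<close>
  also have "\<dots> = 1 / of_nat d ^ (3 * n) * (\<Sum>a\<in>?Z. \<Sum>b\<in>?Z. \<Sum>x\<in>?Z.
        compiled_prob d n M (conjop d n (Xop d n x) (conjop d n (Zop d n a) (M (vsub d k x)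
          (conjop d n (Zop d n b) (conjop d n (Xop d n (vneg d x)) (conjop d n (Xop d n a') \<sigma>))))))
          ks)"
    using d Cons.prems(1)
    by (intro arg_cong[where f = "\<lambda>t. _ * t"] sum.cong refl)
       (simp add: conjop_Zop_Xop_Xop_eq_gate conjop_Xop_Zop_commute compiled_prob_conjop_Zop
         length_Zdn)
  also have "\<dots> = compiled_prob d n M (conjop d n (Xop d n a') \<sigma>) (k # ks)"
    using d M ks by (simp add: Mhat_def compiled_prob_oscale compiled_prob_sum)
  finally show ?case .
qed

theorem lemma1:
  fixes d n m :: nat and M :: "nat list \<Rightarrow> op \<Rightarrow> op" and \<rho> :: op and ks :: "nat list list"
  assumes "d \<ge> 1" and "n \<ge> 1" and "m \<ge> 1"
    and "instrument d n M"
    and "density d n \<rho>"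
    and "ks \<in> seqs d n m"
  shows "routine_prob d n M \<rho> m ks = otr d n (foldl (\<lambda>\<sigma> k. Mhat d n M k \<sigma>) \<rho> ks)"
proof -
  have d: "0 < d" and M: "instrument d n M"
    using assms by auto
  have \<rho>: "psd d n \<rho>" "otr d n \<rho> = 1"
    using assms(5) by (simp_all add: density_iff_psd)
  have len: "length ks = m" and ks: "set ks \<subseteq> Zdn d n"
    using assms(6) by (auto simp: seqs_def)
  have "routine_prob d n M \<rho> m ks = shifted_routine_prob d n M \<rho> (vzero n) ks"
    unfolding routine_prob_def shifted_routine_prob_def len
    using seqprob_eq_otr_run_state[OF d M vzero_in_Zdn[OF d] _ _ _ _ \<rho>]
    by (intro sum.cong refl) (auto simp: seqs_def)
  also have "\<dots> = compiled_prob d n M (conjop d n (Xop d n (vzero n)) \<rho>) ks"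
    by (rule shifted_routine_prob_eq_compiled_prob[OF d M vzero_in_Zdn[OF d] ks])
  also have "\<dots> = compiled_prob d n M \<rho> ks"
    using d by (rule compiled_prob_conjop_Xop_vzero)
  finally show ?thesis
    by (simp add: compiled_prob_def)
qed

end
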